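(* Let $f\colon\mathbb{R}^2\to\mathbb{R}$, $f(x_1,x_3)=\frac14(x_3^2-1)$. There is a smooth family of functions $f_t^\delta\colon[-2,2]\times[-2,2]\to\mathbb{R}$, parametrised by $\delta\in(0,\frac1{10}]$ and $t\in[-1,1]$, with the following properties: (1) $f_{-1}^\delta=f$; (2) $f_t^\delta$ is independent of $t$ outside the square $[-1-2\delta,1+2\delta]\times[-1-2\delta,1+2\delta]$; (3) for $t<0$ the zero-set of $f_t^\delta$ consists of two arcs, homotopic to those of $f$ (namely the segments $\{x_3=1\}$ and $\{x_3=-1\}$); for $t=0$ the zero-set is a letter X (two arcs crossing transversally at a single point); and for $t>0$ it again consists of two arcs, connecting the endpoints the other way; moreover the vanishing is of order exactly $1$, except at the singular point when $t=0$, where it is quadratic; (4) $f_t^\delta$ is bounded in $C^1$, uniformly in $t$ and $\delta$. *)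

theory Defs
  imports "HOL-Analysis.Analysis"
begin

text \<open>C-infinity smoothness of a real-valued function on a set S: f is differentiable
  (within S) at every point of S and every directional derivative is again smooth.
  (Coinductive, so derivatives of all orders exist.)\<close>
coinductive smooth_on :: "'a::real_normed_vector set \<Rightarrow> ('a \<Rightarrow> real) \<Rightarrow> bool" for S where
  smooth_onI: "(\<And>x. x \<in> S \<Longrightarrow> (f has_derivative f' x) (at x within S))
     \<Longrightarrow> (\<And>v. smooth_on S (\<lambda>x. f' x v)) \<Longrightarrow> smooth_on S f"

definition d1 :: "(real \<times> real \<Rightarrow> real) \<Rightarrow> real \<times> real \<Rightarrow> real" where
  "d1 g p = deriv (\<lambda>s. g (s, snd p)) (fst p)"

definition d2 :: "(real \<times> real \<Rightarrow> real) \<Rightarrow> real \<times> real \<Rightarrow> real" where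
  "d2 g p = deriv (\<lambda>s. g (fst p, s)) (snd p)"

definition sq :: "real \<Rightarrow> real \<Rightarrow> (real \<times> real) set" where
  "sq a b = {a..b} \<times> {a..b}"

definition f0 :: "real \<times> real \<Rightarrow> real" where
  "f0 p = ((snd p)^2 - 1) / 4"

definition zeroset :: "(real \<times> real \<Rightarrow> real) \<Rightarrow> (real \<times> real) set" where
  "zeroset g = {p \<in> sq (-2) 2. g p = 0}"

definition order_one :: "(real \<times> real \<Rightarrow> real) \<Rightarrow> real \<times> real \<Rightarrow> bool" where
  "order_one g p \<longleftrightarrow> g p = 0 \<and> (d1 g p, d2 g p) \<noteq> (0, 0)"

text \<open>Quadratic (nondegenerate, saddle-type) vanishing at p: value and gradient vanish,
  Hessian is nondegenerate and indefinite (so the zero set is locally two transversal curves).\<close>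
definition quadratic_crossing :: "(real \<times> real \<Rightarrow> real) \<Rightarrow> real \<times> real \<Rightarrow> bool" where
  "quadratic_crossing g p \<longleftrightarrow> g p = 0 \<and> d1 g p = 0 \<and> d2 g p = 0 \<and>
     d1 (d1 g) p * d2 (d2 g) p - d2 (d1 g) p * d1 (d2 g) p < 0"

end

theory Submission
  imports Defs "HOL-Computational_Algebra.Polynomial"
begin

text \<open>
  The deformation is
  \<open>f\<^sub>t(x\<^sub>1, x\<^sub>3) = (x\<^sub>3\<^sup>2 - 1 + w(t) \<beta>(x\<^sub>1) C(x\<^sub>3\<^sup>2)) / 4\<close>,
  built from \<open>\<psi>(x) = exp (-1/x)\<close>: a bump \<open>\<beta>\<close> with \<open>\<beta>(0) = 1\<close>, \<open>\<beta> < 1\<close> elsewhere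
  and support in \<open>|x\<^sub>1| < 1\<close>; a weight with \<open>w(-1) = 0\<close>, \<open>w < 1\<close> for \<open>t < 0\<close>, \<open>w(0) = 1\<close>
  and \<open>w(t) = 1 + t\<delta>\<close> for \<open>t > 0\<close>; and a cutoff \<open>C\<close> that is the affine function
  \<open>1 - (1 - \<delta>) u\<close> for \<open>u \<le> 1\<close> and vanishes for \<open>u \<ge> (1 + 2\<delta>)\<^sup>2\<close>.

  Because \<open>C\<close> is affine where it matters, the zero set is explicit: with \<open>B = w(t) \<beta>(x\<^sub>1)\<close> it is
  \<open>x\<^sub>3 = \<plusminus>r(x\<^sub>1)\<close>, \<open>r = sqrt ((1 - B) / (1 - (1 - \<delta>) B))\<close>, over the set where \<open>B \<le> 1\<close>.
  For \<open>t < 0\<close> we have \<open>B < 1\<close>, so \<open>r > 0\<close> and the two graphs stay apart; for \<open>t = 0\<close> they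
  meet only over \<open>x\<^sub>1 = 0\<close>, where the Hessian is \<open>diag (\<beta>''(0)/4, \<delta>/2)\<close> with \<open>\<beta>''(0) < 0\<close>;
  for \<open>t > 0\<close> the region \<open>B > 1\<close> is an interval \<open>(-\<rho>, \<rho>)\<close> and the graphs reconnect over
  \<open>[-2, -\<rho>]\<close> and \<open>[\<rho>, 2]\<close>. Wherever \<open>x\<^sub>3 \<noteq> 0\<close> on the zero set the \<open>x\<^sub>3\<close>-derivative is
  nonzero, and where \<open>x\<^sub>3 = 0\<close> the \<open>x\<^sub>1\<close>-derivative \<open>w \<beta>'(x\<^sub>1)/4\<close> is.
\<close>

section \<open>Smooth functions\<close>

lemma smooth_onD:
  assumes "smooth_on S f"
  shows "\<exists>f'. (\<forall>x\<in>S. (f has_derivative f' x) (at x within S)) \<and> (\<forall>v. smooth_on S (\<lambda>x. f' x v))"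
  using assms by (cases rule: smooth_on.cases) blast

lemma real_linear_eq_scale: "bounded_linear (l :: real \<Rightarrow> real) \<Longrightarrow> l v = l 1 * v"
  using linear_scale[of l v 1] by (simp add: bounded_linear.linear mult.commute)

text \<open>Smoothness is proved by coinduction up to this closure: the directional derivatives of
  a generated function are again generated.\<close>
inductive smooth_generated :: "'a::real_normed_vector set \<Rightarrow> ('a \<Rightarrow> real) \<Rightarrow> bool" for S where
  smooth: "smooth_on S f \<Longrightarrow> smooth_generated S f"
| const: "smooth_generated S (\<lambda>x. c)"
| linear: "bounded_linear l \<Longrightarrow> smooth_generated S l"
| add: "smooth_generated S f \<Longrightarrow> smooth_generated S g \<Longrightarrow> smooth_generated S (\<lambda>x. f x + g x)"
| mult: "smooth_generated S f \<Longrightarrow> smooth_generated S g \<Longrightarrow> smooth_generated S (\<lambda>x. f x * g x)"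
| compose: "smooth_on T z \<Longrightarrow> (\<And>x. x \<in> S \<Longrightarrow> f x \<in> T) \<Longrightarrow> smooth_generated S f
    \<Longrightarrow> smooth_generated S (\<lambda>x. z (f x))"

lemma smooth_generated_derivative:
  assumes "smooth_generated S f"
  shows "\<exists>f'. (\<forall>x\<in>S. (f has_derivative f' x) (at x within S)) \<and> (\<forall>v. smooth_generated S (\<lambda>x. f' x v))"
  using assms
proof induction
  case (smooth f)
  then show ?case using smooth_onD smooth_generated.smooth by metis
next
  case (const c)
  show ?case
    by (rule exI[of _ "\<lambda>x v. 0"]) (auto intro: smooth_generated.const)
next
  case (linear l)
  then show ?case
    by (intro exI[of _ "\<lambda>x. l"]) (auto intro: bounded_linear_imp_has_derivative smooth_generated.const)
next
  case (add f g)
  then obtain f' g' where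
    "\<forall>x\<in>S. (f has_derivative f' x) (at x within S)" "\<forall>v. smooth_generated S (\<lambda>x. f' x v)"
    "\<forall>x\<in>S. (g has_derivative g' x) (at x within S)" "\<forall>v. smooth_generated S (\<lambda>x. g' x v)"
    by blast
  then show ?case
    by (intro exI[of _ "\<lambda>x v. f' x v + g' x v"])
      (auto intro!: derivative_eq_intros smooth_generated.add)
next
  case (mult f g)
  then obtain f' g' where
    "\<forall>x\<in>S. (f has_derivative f' x) (at x within S)" "\<forall>v. smooth_generated S (\<lambda>x. f' x v)"
    "\<forall>x\<in>S. (g has_derivative g' x) (at x within S)" "\<forall>v. smooth_generated S (\<lambda>x. g' x v)"
    by blast
  with mult.hyps show ?case
    by (intro exI[of _ "\<lambda>x v. f x * g' x v + f' x v * g x"])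
      (auto intro!: derivative_eq_intros smooth_generated.add smooth_generated.mult)
next
  case (compose T z f)
  obtain f' where f': "\<forall>x\<in>S. (f has_derivative f' x) (at x within S)" "\<forall>v. smooth_generated S (\<lambda>x. f' x v)"
    using compose.IH by blast
  obtain z' where z': "\<forall>y\<in>T. (z has_derivative z' y) (at y within T)" "\<forall>v. smooth_on T (\<lambda>y. z' y v)"
    using smooth_onD[OF compose.hyps(1)] by blast
  have "((\<lambda>x. z (f x)) has_derivative (\<lambda>v. z' (f x) 1 * f' x v)) (at x within S)" if "x \<in> S" for x
  proof -
    have fx: "f x \<in> T" using compose.hyps(2) that .
    have "((\<lambda>x. z (f x)) has_derivative (\<lambda>v. z' (f x) (f' x v))) (at x within S)"
      by (rule has_derivative_in_compose2[of T z z' f S x "f' x"])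
        (use z'(1) compose.hyps(2) that f'(1) in auto)
    moreover have "bounded_linear (z' (f x))"
      using z'(1) fx by (blast intro: has_derivative_bounded_linear)
    ultimately show ?thesis by (simp add: real_linear_eq_scale[of "z' (f x)" "f' x _"])
  qed
  moreover have "smooth_generated S (\<lambda>x. z' (f x) 1)"
    by (rule smooth_generated.compose[OF z'(2)[rule_format] compose.hyps(2,3)])
  ultimately show ?case
    using f'(2) by (intro exI[of _ "\<lambda>x v. z' (f x) 1 * f' x v"]) (simp add: smooth_generated.mult)
qed

lemma smooth_on_generated: "smooth_generated S f \<Longrightarrow> smooth_on S f"
proof (coinduction arbitrary: f rule: smooth_on.coinduct)
  case (smooth_on f)
  then obtain f' where "\<forall>x\<in>S. (f has_derivative f' x) (at x within S)" "\<forall>v. smooth_generated S (\<lambda>x. f' x v)"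
    using smooth_generated_derivative by blast
  then show ?case by auto
qed

lemma smooth_on_const: "smooth_on S (\<lambda>x. c)"
  by (rule smooth_on_generated[OF smooth_generated.const])

lemma smooth_on_linear: "bounded_linear l \<Longrightarrow> smooth_on S l"
  by (rule smooth_on_generated[OF smooth_generated.linear])

lemma smooth_on_add: "smooth_on S f \<Longrightarrow> smooth_on S g \<Longrightarrow> smooth_on S (\<lambda>x. f x + g x)"
  by (rule smooth_on_generated[OF smooth_generated.add[OF smooth_generated.smooth smooth_generated.smooth]])

lemma smooth_on_mult: "smooth_on S f \<Longrightarrow> smooth_on S g \<Longrightarrow> smooth_on S (\<lambda>x. f x * g x)"
  by (rule smooth_on_generated[OF smooth_generated.mult[OF smooth_generated.smooth smooth_generated.smooth]])

lemma smooth_on_compose: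
  "smooth_on T z \<Longrightarrow> (\<And>x. x \<in> S \<Longrightarrow> f x \<in> T) \<Longrightarrow> smooth_on S f \<Longrightarrow> smooth_on S (\<lambda>x. z (f x))"
  by (rule smooth_on_generated[OF smooth_generated.compose[OF _ _ smooth_generated.smooth]])

lemma smooth_on_diff: "smooth_on S f \<Longrightarrow> smooth_on S g \<Longrightarrow> smooth_on S (\<lambda>x. f x - g x)"
  using smooth_on_add[of S f "\<lambda>x. (-1) * g x"] smooth_on_mult[OF smooth_on_const, of S g "-1"] by simp

lemma smooth_on_power: "smooth_on S f \<Longrightarrow> smooth_on S (\<lambda>x. f x ^ n)"
  by (induction n) (auto intro: smooth_on_const smooth_on_mult)

lemma smooth_on_real_by_derivatives:
  fixes S :: "real set" and G :: "(real \<Rightarrow> real) set"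
  assumes G: "\<And>g. g \<in> G \<Longrightarrow>
      \<exists>g'. (\<forall>x\<in>S. (g has_field_derivative g' x) (at x within S)) \<and> (\<forall>c. (\<lambda>x. c * g' x) \<in> G)"
    and "f \<in> G"
  shows "smooth_on S f"
  using \<open>f \<in> G\<close>
proof (coinduction arbitrary: f rule: smooth_on.coinduct)
  case (smooth_on f)
  then obtain f' where "\<forall>x\<in>S. (f has_field_derivative f' x) (at x within S)" "\<forall>c. (\<lambda>x. c * f' x) \<in> G"
    using G by blast
  then show ?case
    by (intro exI[of _ f] exI[of _ "\<lambda>x. times (f' x)"]) (auto simp: has_field_derivative_def mult.commute)
qed

lemma smooth_on_inverse: "smooth_on {0<..} (\<lambda>x::real. inverse x)"
proof (rule smooth_on_real_by_derivatives[where G = "{\<lambda>x::real. c * inverse x ^ n |c n. True}"])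
  fix g assume "g \<in> {\<lambda>x::real. c * inverse x ^ n |c n. True}"
  then obtain c n where g: "g = (\<lambda>x. c * inverse x ^ n)" by blast
  have "(g has_field_derivative - c * real n * inverse x ^ Suc n) (at x within {0<..})" if "0 < x" for x
  proof -
    have "(g has_field_derivative c * (real n * inverse x ^ (n - 1) * - (inverse x ^ 2))) (at x within {0<..})"
      unfolding g using that by (auto intro!: derivative_eq_intros simp: power2_eq_square)
    also have "c * (real n * inverse x ^ (n - 1) * - (inverse x ^ 2)) = - c * real n * inverse x ^ Suc n"
      by (cases n) (auto simp: power2_eq_square)
    finally show ?thesis .
  qed
  moreover have "(\<lambda>x. k * (- c * real n * inverse x ^ Suc n)) \<in> {\<lambda>x::real. c * inverse x ^ n |c n. True}" for k
    by (intro CollectI exI[of _ "- k * c * real n"] exI[of _ "Suc n"]) auto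
  ultimately show "\<exists>g'. (\<forall>x\<in>{0<..}. (g has_field_derivative g' x) (at x within {0<..})) \<and>
      (\<forall>c. (\<lambda>x. c * g' x) \<in> {\<lambda>x::real. c * inverse x ^ n |c n. True})"
    by (intro exI[of _ "\<lambda>x. - c * real n * inverse x ^ Suc n"]) auto
next
  show "(\<lambda>x::real. inverse x) \<in> {\<lambda>x::real. c * inverse x ^ n |c n. True}"
    by (intro CollectI exI[of _ 1] exI[of _ 1]) simp
qed

lemma smooth_on_UNIV_real_has_derivative:
  fixes g :: "real \<Rightarrow> real"
  assumes "smooth_on UNIV g"
  shows "(g has_real_derivative deriv g x) (at x)" and "smooth_on UNIV (deriv g)"
proof -
  obtain g' where g': "\<forall>x. (g has_derivative g' x) (at x)" "\<forall>v. smooth_on UNIV (\<lambda>x. g' x v)"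
    using smooth_onD[OF assms] by auto
  have "(g has_real_derivative g' x 1) (at x)" for x
  proof -
    have "g' x = (\<lambda>v. g' x 1 * v)"
      using real_linear_eq_scale[OF has_derivative_bounded_linear[OF g'(1)[rule_format, of x]]] by blast
    then show ?thesis
      using g'(1) by (metis has_field_derivative_def)
  qed
  moreover from this have "deriv g = (\<lambda>x. g' x 1)"
    by (simp add: DERIV_imp_deriv fun_eq_iff)
  ultimately show "(g has_real_derivative deriv g x) (at x)" and "smooth_on UNIV (deriv g)"
    using g'(2) by auto
qed

lemma smooth_on_UNIV_real_isCont: "smooth_on UNIV (g :: real \<Rightarrow> real) \<Longrightarrow> isCont g x"
  using smooth_on_UNIV_real_has_derivative(1) by (rule DERIV_isCont)

section \<open>The flat function \<open>exp (-1/x)\<close> and smooth steps\<close>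

text \<open>Every derivative of \<open>exp (-1/x)\<close> has this form, which is what makes it smooth and flat at \<open>0\<close>.\<close>
definition flat_exp :: "real poly \<Rightarrow> real \<Rightarrow> real" where
  "flat_exp p x = (if 0 < x then poly p (inverse x) * exp (- inverse x) else 0)"

definition flat_pderiv :: "real poly \<Rightarrow> real poly" where
  "flat_pderiv p = monom 1 2 * (p - pderiv p)"

lemma tendsto_poly_mult_exp_neg_at_top: "((\<lambda>y. poly p y * exp (- y)) \<longlongrightarrow> (0::real)) at_top"
proof -
  have "((\<lambda>y. \<Sum>i\<le>degree p. coeff p i * (y ^ i / exp y)) \<longlongrightarrow> (0::real)) at_top"
    by (intro tendsto_null_sum tendsto_mult_right_zero tendsto_power_div_exp_0)
  moreover have "poly p y * exp (- y) = (\<Sum>i\<le>degree p. coeff p i * (y ^ i / exp y))" for y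
    unfolding poly_altdef sum_distrib_right by (simp add: exp_minus divide_inverse mult.assoc)
  ultimately show ?thesis by simp
qed

lemma flat_exp_has_real_derivative:
  "(flat_exp p has_real_derivative flat_exp (flat_pderiv p) x) (at x)"
proof -
  consider "0 < x" | "x < 0" | "x = 0" by linarith
  then show ?thesis
  proof cases
    case 1
    have "((\<lambda>x. poly p (inverse x) * exp (- inverse x)) has_real_derivative
        poly (pderiv p) (inverse x) * - (inverse x ^ 2) * exp (- inverse x) +
        poly p (inverse x) * (exp (- inverse x) * inverse x ^ 2)) (at x)"
      using 1 by (auto intro!: derivative_eq_intros simp: power2_eq_square)
    also have "poly (pderiv p) (inverse x) * - (inverse x ^ 2) * exp (- inverse x) +
        poly p (inverse x) * (exp (- inverse x) * inverse x ^ 2) = flat_exp (flat_pderiv p) x"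
      using 1 by (simp add: flat_exp_def flat_pderiv_def poly_monom algebra_simps)
    finally show ?thesis
      by (rule has_field_derivative_transform_within_open[of _ _ _ "{0<..}"]) (use 1 in \<open>auto simp: flat_exp_def\<close>)
  next
    case 2
    have "((\<lambda>_. 0) has_real_derivative flat_exp (flat_pderiv p) x) (at x)"
      using 2 by (simp add: flat_exp_def)
    then show ?thesis
      by (rule has_field_derivative_transform_within_open[of _ _ _ "{..<0}"]) (use 2 in \<open>auto simp: flat_exp_def\<close>)
  next
    case 3
    have "((\<lambda>h. poly (pCons 0 p) (inverse h) * exp (- inverse h)) \<longlongrightarrow> 0) (at_right 0)"
      by (rule filterlim_compose[OF tendsto_poly_mult_exp_neg_at_top filterlim_inverse_at_top_right])
    then have right: "((\<lambda>h. flat_exp p h / h) \<longlongrightarrow> 0) (at_right 0)"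
    proof (rule Lim_transform_eventually)
      show "\<forall>\<^sub>F h in at_right 0. poly (pCons 0 p) (inverse h) * exp (- inverse h) = flat_exp p h / h"
        using eventually_at_right_less[of 0]
        by (rule eventually_mono) (simp add: flat_exp_def divide_inverse mult_ac)
    qed
    have left: "((\<lambda>h. flat_exp p h / h) \<longlongrightarrow> 0) (at_left (0::real))"
      by (rule Lim_transform_eventually[OF tendsto_const])
        (auto simp: flat_exp_def intro: eventually_at_leftI[of "-1"])
    have "(\<lambda>h. (flat_exp p h - flat_exp p 0) / (h - 0)) = (\<lambda>h. flat_exp p h / h)"
      by (simp add: flat_exp_def)
    moreover have "flat_exp (flat_pderiv p) 0 = 0"
      by (simp add: flat_exp_def)
    ultimately have "((\<lambda>h. (flat_exp p h - flat_exp p 0) / (h - 0)) \<longlongrightarrow> flat_exp (flat_pderiv p) 0) (at 0)"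
      using filterlim_split_at[OF left right] by metis
    then show ?thesis
      unfolding 3 has_field_derivative_iff .
  qed
qed

lemma isCont_flat_exp: "isCont (flat_exp p) x"
  using flat_exp_has_real_derivative by (rule DERIV_isCont)

lemma smooth_on_flat_exp: "smooth_on S (flat_exp p)"
proof (rule smooth_on_real_by_derivatives[where G = "range flat_exp"])
  fix g assume "g \<in> range flat_exp"
  then obtain q where "g = flat_exp q" by blast
  moreover have "(\<lambda>x. c * flat_exp r x) = flat_exp (smult c r)" for c r
    by (simp add: flat_exp_def fun_eq_iff)
  ultimately show "\<exists>g'. (\<forall>x\<in>S. (g has_field_derivative g' x) (at x within S)) \<and> (\<forall>c. (\<lambda>x. c * g' x) \<in> range flat_exp)"
    by (intro exI[of _ "flat_exp (flat_pderiv q)"])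
      (auto intro: has_field_derivative_at_within flat_exp_has_real_derivative)
qed simp

definition psi :: "real \<Rightarrow> real" where
  "psi x = (if 0 < x then exp (- inverse x) else 0)"

lemma psi_eq_flat_exp: "psi = flat_exp 1"
  by (simp add: fun_eq_iff psi_def flat_exp_def)

lemma psi_has_real_derivative: "(psi has_real_derivative flat_exp (monom 1 2) x) (at x)"
  using flat_exp_has_real_derivative[of 1 x] by (simp add: psi_eq_flat_exp flat_pderiv_def)

lemma smooth_on_psi: "smooth_on S psi"
  by (simp add: psi_eq_flat_exp smooth_on_flat_exp)

lemma psi_nonpos: "x \<le> 0 \<Longrightarrow> psi x = 0"
  by (simp add: psi_def)

lemma psi_pos: "0 < x \<Longrightarrow> 0 < psi x"
  by (simp add: psi_def)

lemma psi_nonneg: "0 \<le> psi x"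
  by (simp add: psi_def)

lemma psi_1: "psi 1 = exp (- 1)"
  by (simp add: psi_def)

lemma psi_strict_mono: "0 < x \<Longrightarrow> x < y \<Longrightarrow> psi x < psi y"
  by (simp add: psi_def field_simps)

lemma psi_mono: "x \<le> y \<Longrightarrow> psi x \<le> psi y"
  using psi_strict_mono[of x y] psi_nonneg[of y] psi_nonpos[of x] by (cases "0 < x"; cases "x = y") auto

lemma flat_exp_monom_2_pos: "0 < x \<Longrightarrow> 0 < flat_exp (monom 1 2) x"
  by (simp add: flat_exp_def poly_monom)

lemma flat_exp_monom_2_at_1: "flat_exp (monom 1 2) 1 = exp (- 1)"
  by (simp add: flat_exp_def poly_monom)

definition smooth_step :: "real \<Rightarrow> real" where
  "smooth_step z = psi z / (psi z + psi (1 - z))"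

lemma psi_add_psi_1_minus_pos: "0 < psi z + psi (1 - z)"
  using psi_pos[of z] psi_pos[of "1 - z"] psi_nonneg[of z] psi_nonneg[of "1 - z"]
  by (cases "0 < z") auto

lemma smooth_on_smooth_step: "smooth_on UNIV smooth_step"
proof -
  have sum: "smooth_on UNIV (\<lambda>z. psi z + psi (1 - z))"
    by (intro smooth_on_add smooth_on_psi smooth_on_compose[OF smooth_on_psi] smooth_on_diff
        smooth_on_const smooth_on_linear bounded_linear_ident) auto
  have "smooth_on UNIV (\<lambda>z. inverse (psi z + psi (1 - z)))"
    by (rule smooth_on_compose[OF smooth_on_inverse _ sum]) (simp add: psi_add_psi_1_minus_pos)
  then show ?thesis
    unfolding smooth_step_def divide_inverse by (intro smooth_on_mult smooth_on_psi)
qed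

lemma smooth_step_nonpos: "z \<le> 0 \<Longrightarrow> smooth_step z = 0"
  by (simp add: smooth_step_def psi_nonpos)

lemma smooth_step_ge_1: "1 \<le> z \<Longrightarrow> smooth_step z = 1"
  using psi_add_psi_1_minus_pos[of z] by (simp add: smooth_step_def psi_nonpos)

lemma smooth_step_nonneg: "0 \<le> smooth_step z"
  by (simp add: smooth_step_def psi_nonneg)

lemma smooth_step_le_1: "smooth_step z \<le> 1"
  using psi_add_psi_1_minus_pos[of z] psi_nonneg[of "1 - z"] by (simp add: smooth_step_def)

lemma smooth_step_has_real_derivative: "(smooth_step has_real_derivative deriv smooth_step z) (at z)"
  using smooth_on_smooth_step by (rule smooth_on_UNIV_real_has_derivative)

lemma deriv_smooth_step_outside: "z < 0 \<or> 1 < z \<Longrightarrow> deriv smooth_step z = 0"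
proof -
  assume z: "z < 0 \<or> 1 < z"
  define I where "I = (if z < 0 then {..<0} else {1::real<..})"
  have "((\<lambda>_. if z < 0 then 0 else 1) has_real_derivative 0) (at z)"
    by simp
  then have "(smooth_step has_real_derivative 0) (at z)"
    by (rule has_field_derivative_transform_within_open[of _ _ _ I])
      (use z in \<open>auto simp: I_def smooth_step_nonpos smooth_step_ge_1 split: if_splits\<close>)
  then show ?thesis
    by (rule DERIV_imp_deriv)
qed

lemma bounded_times_deriv_smooth_step: "\<exists>K. \<forall>z. \<bar>z * deriv smooth_step z\<bar> \<le> K"
proof -
  have "continuous_on {0..1} (\<lambda>z. z * deriv smooth_step z)"
    using smooth_on_UNIV_real_isCont[OF smooth_on_UNIV_real_has_derivative(2)[OF smooth_on_smooth_step]]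
    by (intro continuous_intros continuous_at_imp_continuous_on) auto
  then obtain K where "0 \<le> K" "\<And>z. z \<in> {0..1} \<Longrightarrow> norm (z * deriv smooth_step z) \<le> K"
    by (rule continuous_on_compact_bound[OF compact_Icc]) auto
  then have "\<bar>z * deriv smooth_step z\<bar> \<le> K" for z
    using deriv_smooth_step_outside[of z] by (cases "0 \<le> z \<and> z \<le> 1") auto
  then show ?thesis by blast
qed

definition ramp :: "real \<Rightarrow> real \<Rightarrow> real" where
  "ramp d y = y * smooth_step (2 * y / d)"

lemma smooth_on_ramp: "smooth_on UNIV (ramp d)"
proof -
  have "smooth_on UNIV (\<lambda>y. smooth_step (2 * y / d))"
    by (rule smooth_on_compose[OF smooth_on_smooth_step _ smooth_on_linear])
      (auto intro: bounded_linear_compose[OF bounded_linear_divide bounded_linear_mult_right])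
  then show ?thesis
    unfolding ramp_def[abs_def] by (rule smooth_on_mult[OF smooth_on_linear[OF bounded_linear_ident]])
qed

lemma ramp_has_real_derivative:
  "0 < d \<Longrightarrow> (ramp d has_real_derivative smooth_step (2 * y / d) + 2 * y / d * deriv smooth_step (2 * y / d)) (at y)"
proof -
  assume "0 < d"
  have "((\<lambda>y. smooth_step (2 * y / d)) has_real_derivative deriv smooth_step (2 * y / d) * (2 / d)) (at y)"
    by (rule DERIV_chain2[OF smooth_step_has_real_derivative]) (use \<open>0 < d\<close> in \<open>auto intro!: derivative_eq_intros\<close>)
  from DERIV_mult[OF DERIV_ident this] show ?thesis
    by (simp add: ramp_def[abs_def] algebra_simps)
qed

lemma deriv_ramp: "0 < d \<Longrightarrow> deriv (ramp d) y = smooth_step (2 * y / d) + 2 * y / d * deriv smooth_step (2 * y / d)"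
  using ramp_has_real_derivative by (rule DERIV_imp_deriv)

lemma bounded_deriv_ramp: "\<exists>K. \<forall>d>0. \<forall>y. \<bar>deriv (ramp d) y\<bar> \<le> K"
proof -
  obtain K where K: "\<forall>z. \<bar>z * deriv smooth_step z\<bar> \<le> K"
    using bounded_times_deriv_smooth_step by blast
  have "\<bar>deriv (ramp d) y\<bar> \<le> 1 + K" if "0 < d" for d y
    unfolding deriv_ramp[OF that] using K[rule_format, of "2 * y / d"] smooth_step_nonneg smooth_step_le_1
    by (smt (verit, best) abs_triangle_ineq)
  then show ?thesis by blast
qed

lemma ramp_eq_self: "0 < d \<Longrightarrow> d / 2 \<le> y \<Longrightarrow> ramp d y = y"
  by (simp add: ramp_def smooth_step_ge_1 field_simps)

lemma ramp_nonpos: "0 < d \<Longrightarrow> y \<le> 0 \<Longrightarrow> ramp d y = 0"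
  by (simp add: ramp_def smooth_step_nonpos divide_nonpos_pos)

lemma ramp_nonneg: "0 < d \<Longrightarrow> 0 \<le> ramp d y"
  by (cases "y \<le> 0") (simp_all add: ramp_nonpos, simp add: ramp_def smooth_step_nonneg)

lemma abs_ramp_le: "\<bar>ramp d y\<bar> \<le> \<bar>y\<bar>"
  using smooth_step_nonneg[of "2 * y / d"] smooth_step_le_1[of "2 * y / d"]
  by (auto simp: ramp_def abs_mult intro!: mult_left_le)

lemma deriv_ramp_eq_1: "0 < d \<Longrightarrow> d / 2 < y \<Longrightarrow> deriv (ramp d) y = 1"
  using smooth_step_ge_1[of "2 * y / d"] deriv_smooth_step_outside[of "2 * y / d"]
  by (simp add: deriv_ramp field_simps)

definition bump :: "real \<Rightarrow> real" where
  "bump x = exp 1 * psi (1 - x\<^sup>2)"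

definition weight :: "real \<Rightarrow> real \<Rightarrow> real" where
  "weight d t = 1 + t * (d + (1 - d) * exp 1 * psi (- t))"

definition cutoff :: "real \<Rightarrow> real \<Rightarrow> real" where
  "cutoff d u = ramp d (1 - (1 - d) * u)"

definition family :: "real \<Rightarrow> real \<Rightarrow> real \<times> real \<Rightarrow> real" where
  "family d t p = ((snd p)\<^sup>2 - 1 + weight d t * bump (fst p) * cutoff d ((snd p)\<^sup>2)) / 4"

lemma smooth_on_bump: "smooth_on UNIV bump"
  unfolding bump_def[abs_def]
  by (intro smooth_on_mult smooth_on_const smooth_on_compose[OF smooth_on_psi] smooth_on_diff
      smooth_on_power smooth_on_linear bounded_linear_ident) auto

lemma smooth_on_weight: "smooth_on UNIV (weight d)"
  unfolding weight_def[abs_def]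
  by (intro smooth_on_add smooth_on_mult smooth_on_const smooth_on_compose[OF smooth_on_psi]
      smooth_on_linear bounded_linear_ident bounded_linear_minus) auto

lemma smooth_on_cutoff: "smooth_on UNIV (cutoff d)"
  unfolding cutoff_def[abs_def]
  by (intro smooth_on_compose[OF smooth_on_ramp] smooth_on_diff smooth_on_const smooth_on_mult
      smooth_on_linear bounded_linear_ident) auto

lemma smooth_on_family: "smooth_on UNIV (\<lambda>(t, x). family d t x)"
proof -
  have "smooth_on UNIV (\<lambda>z :: real \<times> real \<times> real. ((snd (snd z))\<^sup>2 - 1 +
      weight d (fst z) * bump (fst (snd z)) * cutoff d ((snd (snd z))\<^sup>2)) / 4)"
    unfolding divide_inverse
    by (intro smooth_on_mult smooth_on_add smooth_on_diff smooth_on_const smooth_on_power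
        smooth_on_compose[OF smooth_on_weight] smooth_on_compose[OF smooth_on_bump]
        smooth_on_compose[OF smooth_on_cutoff] smooth_on_linear bounded_linear_fst
        bounded_linear_compose[OF bounded_linear_fst bounded_linear_snd]
        bounded_linear_compose[OF bounded_linear_snd bounded_linear_snd] UNIV_I)
  then show ?thesis
    by (simp add: family_def case_prod_unfold)
qed

lemma bump_0: "bump 0 = 1"
  by (simp add: bump_def psi_1 exp_minus)

lemma bump_eq_0: "1 \<le> x\<^sup>2 \<Longrightarrow> bump x = 0"
  by (simp add: bump_def psi_nonpos)

lemma bump_nonneg: "0 \<le> bump x"
  by (simp add: bump_def psi_nonneg)

lemma bump_strict_antimono: "x\<^sup>2 < y\<^sup>2 \<Longrightarrow> x\<^sup>2 < 1 \<Longrightarrow> bump y < bump x"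
  using psi_strict_mono[of "1 - y\<^sup>2" "1 - x\<^sup>2"] psi_pos[of "1 - x\<^sup>2"] psi_nonpos[of "1 - y\<^sup>2"]
  by (cases "y\<^sup>2 < 1") (auto simp: bump_def)

lemma bump_less_1: "x \<noteq> 0 \<Longrightarrow> bump x < 1"
  using bump_strict_antimono[of 0 x] by (simp add: bump_0)

lemma bump_le_1: "bump x \<le> 1"
  using bump_less_1[of x] by (cases "x = 0") (auto simp: bump_0)

lemma isCont_bump: "isCont bump x"
  using smooth_on_bump by (rule smooth_on_UNIV_real_isCont)

lemma bump_has_real_derivative:
  "(bump has_real_derivative - 2 * exp 1 * x * flat_exp (monom 1 2) (1 - x\<^sup>2)) (at x)"
proof -
  have "((\<lambda>x. psi (1 - x\<^sup>2)) has_real_derivative flat_exp (monom 1 2) (1 - x\<^sup>2) * - (2 * x)) (at x)"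
    by (rule DERIV_chain2[OF psi_has_real_derivative]) (auto intro!: derivative_eq_intros)
  from DERIV_cmult[OF this, of "exp 1"] show ?thesis
    by (simp add: bump_def[abs_def] mult_ac)
qed

lemma deriv_bump: "deriv bump x = - 2 * exp 1 * x * flat_exp (monom 1 2) (1 - x\<^sup>2)"
  using bump_has_real_derivative by (rule DERIV_imp_deriv)

lemma deriv_bump_0: "deriv bump 0 = 0"
  by (simp add: deriv_bump)

lemma deriv_bump_nonzero: "x \<noteq> 0 \<Longrightarrow> x\<^sup>2 < 1 \<Longrightarrow> deriv bump x \<noteq> 0"
  using flat_exp_monom_2_pos[of "1 - x\<^sup>2"] by (simp add: deriv_bump)

lemma isCont_deriv_bump: "isCont (deriv bump) x"
  unfolding deriv_bump[abs_def] by (intro continuous_intros isCont_o2[OF _ isCont_flat_exp])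

lemma deriv_bump_has_real_derivative_at_0: "(deriv bump has_real_derivative - 2) (at 0)"
proof -
  have "((\<lambda>x. - 2 * exp 1 * x * flat_exp (monom 1 2) (1 - x\<^sup>2)) has_real_derivative
      - 2 * exp 1 * flat_exp (monom 1 2) 1) (at 0)"
    by (auto intro!: derivative_eq_intros DERIV_chain2[OF flat_exp_has_real_derivative])
  then show ?thesis
    by (simp add: deriv_bump[abs_def] flat_exp_monom_2_at_1 exp_minus mult.assoc)
qed

lemma weight_minus_1: "weight d (- 1) = 0"
  by (simp add: weight_def psi_1 exp_minus field_simps)

lemma weight_0: "weight d 0 = 1"
  by (simp add: weight_def)

lemma weight_pos: "0 < t \<Longrightarrow> weight d t = 1 + t * d"
  by (simp add: weight_def psi_nonpos)

lemma weight_neg: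
  assumes "0 < d" "d < 1" "- 1 \<le> t" "t < 0"
  shows "0 \<le> weight d t" "weight d t < 1"
proof -
  define w where "w = d + (1 - d) * exp 1 * psi (- t)"
  have "psi (- t) \<le> psi 1"
    using assms by (intro psi_mono) simp
  then have "exp 1 * psi (- t) \<le> 1"
    by (simp add: psi_1 exp_minus field_simps)
  then have "(1 - d) * (exp 1 * psi (- t)) \<le> 1 - d"
    using assms mult_left_mono[of "exp 1 * psi (- t)" 1 "1 - d"] by simp
  moreover have "0 \<le> (1 - d) * (exp 1 * psi (- t))"
    using assms psi_nonneg[of "- t"] by simp
  ultimately have "0 < w" "w \<le> 1"
    using assms unfolding w_def mult.assoc by linarith+
  moreover have "weight d t = 1 + t * w"
    by (simp add: weight_def w_def)
  ultimately show "0 \<le> weight d t" "weight d t < 1"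
    using assms mult_right_mono[of "- 1" t w] by (auto simp: mult_neg_pos)
qed

lemma weight_bounds:
  assumes "0 < d" "d < 1" "- 1 \<le> t" "t \<le> 1"
  shows "0 \<le> weight d t" "weight d t \<le> 1 + d"
  using weight_neg[of d t] weight_pos[of t d] weight_0[of d] assms mult_right_mono[of t 1 d]
  by (cases t "0::real" rule: linorder_cases; force)+

lemma weight_eq_1_iff:
  assumes "0 < d" "d < 1" "- 1 \<le> t"
  shows "weight d t = 1 \<longleftrightarrow> t = 0"
  using weight_neg[of d t] weight_pos[of t d] weight_0[of d] assms
  by (cases t "0::real" rule: linorder_cases) auto

lemma bump_le_bump_iff: "y\<^sup>2 < 1 \<Longrightarrow> bump x \<le> bump y \<longleftrightarrow> y\<^sup>2 \<le> x\<^sup>2"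
  using bump_strict_antimono[of x y] bump_strict_antimono[of y x]
  by (cases "x\<^sup>2" "y\<^sup>2" rule: linorder_cases) (auto simp: bump_def)

lemma bump_eq_bump_iff: "y\<^sup>2 < 1 \<Longrightarrow> bump x = bump y \<longleftrightarrow> x\<^sup>2 = y\<^sup>2"
  using bump_strict_antimono[of x y] bump_strict_antimono[of y x]
  by (cases "x\<^sup>2" "y\<^sup>2" rule: linorder_cases) (auto simp: bump_def)

lemma family_minus_1: "family d (- 1) x = f0 x"
  by (simp add: family_def f0_def weight_minus_1)

lemma family_eq_f0_outside:
  assumes "0 < d" "d \<le> 1 / 2" "x \<notin> sq (- 1 - 2 * d) (1 + 2 * d)"
  shows "family d t x = f0 x"
proof -
  obtain x1 x3 where x: "x = (x1, x3)"
    by fastforce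
  consider "1 + 2 * d < \<bar>x1\<bar>" | "1 + 2 * d < \<bar>x3\<bar>"
    using assms(3) by (auto simp: x sq_def abs_if)
  then show ?thesis
  proof cases
    case 1
    then have "\<not> x1\<^sup>2 < 1"
      using assms(1) by (simp add: abs_square_less_1)
    then show ?thesis
      by (simp add: x family_def f0_def bump_eq_0)
  next
    case 2
    have "(1 + 2 * d)\<^sup>2 \<le> x3\<^sup>2"
      using 2 assms(1) by (simp add: abs_le_square_iff[symmetric])
    then have "(1 - d) * (1 + 2 * d)\<^sup>2 \<le> (1 - d) * x3\<^sup>2"
      using assms(2) by (intro mult_left_mono) auto
    moreover have "1 \<le> (1 - d) * (1 + 2 * d)\<^sup>2"
      using assms(1,2) mult_mono[of d "1/2" d "1/2"] by (simp add: power2_eq_square algebra_simps)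
    ultimately have "cutoff d (x3\<^sup>2) = 0"
      using assms(1) by (simp add: cutoff_def ramp_nonpos)
    then show ?thesis
      by (simp add: x family_def f0_def)
  qed
qed

section \<open>The zero set as a union of graphs\<close>

definition amplitude :: "real \<Rightarrow> real \<Rightarrow> real \<Rightarrow> real" where
  "amplitude d t x = weight d t * bump x"

definition level :: "real \<Rightarrow> real \<Rightarrow> real" where
  "level d B = (1 - B) / (1 - (1 - d) * B)"

definition branch :: "real \<Rightarrow> real \<Rightarrow> real \<Rightarrow> real" where
  "branch d t x = sqrt (level d (amplitude d t x))"

lemma family_eq: "family d t (x1, x3) = (x3\<^sup>2 - 1 + amplitude d t x1 * cutoff d (x3\<^sup>2)) / 4"
  by (simp add: family_def amplitude_def)

lemma amplitude_bounds:
  assumes "0 < d" "d < 1" "- 1 \<le> t" "t \<le> 1"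
  shows "0 \<le> amplitude d t x" "amplitude d t x \<le> 1 + d"
  using weight_bounds[OF assms] bump_nonneg[of x] bump_le_1[of x]
    mult_mono[of "weight d t" "1 + d" "bump x" 1]
  by (auto simp: amplitude_def)

lemma cutoff_nonneg: "0 < d \<Longrightarrow> 0 \<le> cutoff d u"
  by (simp add: cutoff_def ramp_nonneg)

lemma cutoff_eq_linear:
  assumes "0 < d" "d < 1" "u \<le> 1"
  shows "cutoff d u = 1 - (1 - d) * u"
proof -
  have "(1 - d) * u \<le> 1 - d"
    using mult_left_mono[of u 1 "1 - d"] assms by simp
  then have "d / 2 \<le> 1 - (1 - d) * u"
    using assms by linarith
  then show ?thesis
    using assms by (simp add: cutoff_def ramp_eq_self)
qed

lemma level_denominator_pos:
  assumes "0 < (d::real)" "d < 1" "0 \<le> B" "B \<le> 1 + d"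
  shows "0 < 1 - (1 - d) * B"
proof -
  have "(1 - d) * B \<le> (1 - d) * (1 + d)"
    by (rule mult_left_mono) (use assms in auto)
  also have "\<dots> < 1"
    using assms by (simp add: algebra_simps)
  finally show ?thesis by simp
qed

lemma level_bounds:
  assumes "0 < d" "d < 1" "0 \<le> B" "B \<le> 1"
  shows "0 \<le> level d B" "level d B \<le> 1"
  using level_denominator_pos[of d B] assms mult_left_mono[of B 1 d]
  by (auto simp: level_def divide_le_eq_1 algebra_simps)

lemma level_eq_0_iff: "0 < d \<Longrightarrow> d < 1 \<Longrightarrow> 0 \<le> B \<Longrightarrow> B \<le> 1 + d \<Longrightarrow> level d B = 0 \<longleftrightarrow> B = 1"
  using level_denominator_pos[of d B] by (auto simp: level_def)

lemma level_0: "level d 0 = 1"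
  by (simp add: level_def)

text \<open>On \<open>u \<le> 1\<close> the cutoff is affine, so the zero set equation is linear in \<open>u\<close>;
  for \<open>u > 1\<close> it has no solution at all.\<close>
lemma zero_equation_iff:
  assumes "0 < d" "d < 1" "0 \<le> B" "B \<le> 1 + d" "0 \<le> u"
  shows "u - 1 + B * cutoff d u = 0 \<longleftrightarrow> B \<le> 1 \<and> u = level d B"
proof (cases "u \<le> 1")
  case True
  have den: "0 < 1 - (1 - d) * B"
    by (rule level_denominator_pos[OF assms(1-4)])
  have "u - 1 + B * cutoff d u = u * (1 - (1 - d) * B) - (1 - B)"
    unfolding cutoff_eq_linear[OF assms(1,2) True] by (simp add: algebra_simps)
  then have "u - 1 + B * cutoff d u = 0 \<longleftrightarrow> u * (1 - (1 - d) * B) = 1 - B"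
    by (simp only: right_minus_eq)
  moreover have "u * (1 - (1 - d) * B) = 1 - B \<longleftrightarrow> u = level d B"
    using den by (simp add: level_def eq_divide_eq)
  moreover have "0 \<le> u * (1 - (1 - d) * B)"
    using den \<open>0 \<le> u\<close> by simp
  ultimately show ?thesis
    by auto
next
  case False
  have "0 < u - 1 + B * cutoff d u"
    using False mult_nonneg_nonneg[OF assms(3) cutoff_nonneg[OF assms(1), of u]] by linarith
  moreover have "level d B < u" if "B \<le> 1"
    using level_bounds(2)[OF assms(1-3) that] False by linarith
  ultimately show ?thesis
    by (metis less_irrefl)
qed

lemma square_eq_iff_sqrt: "0 \<le> L \<Longrightarrow> x\<^sup>2 = L \<longleftrightarrow> x = sqrt L \<or> x = - sqrt L"
  by (metis power2_eq_iff real_sqrt_pow2)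

lemma zeroset_family:
  assumes "0 < d" "d < 1" "- 1 \<le> t" "t \<le> 1"
  shows "zeroset (family d t) = {(x1, x3). - 2 \<le> x1 \<and> x1 \<le> 2 \<and> amplitude d t x1 \<le> 1 \<and>
    (x3 = branch d t x1 \<or> x3 = - branch d t x1)}"
proof -
  have "(x1, x3) \<in> zeroset (family d t) \<longleftrightarrow> - 2 \<le> x1 \<and> x1 \<le> 2 \<and>
      amplitude d t x1 \<le> 1 \<and> (x3 = branch d t x1 \<or> x3 = - branch d t x1)" for x1 x3
  proof -
    have B: "0 \<le> amplitude d t x1" "amplitude d t x1 \<le> 1 + d"
      using amplitude_bounds[OF assms] by auto
    have "family d t (x1, x3) = 0 \<longleftrightarrow> amplitude d t x1 \<le> 1 \<and> x3\<^sup>2 = level d (amplitude d t x1)"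
      using zero_equation_iff[OF assms(1,2) B zero_le_power2] by (simp add: family_eq)
    moreover have "x3\<^sup>2 = level d (amplitude d t x1) \<longleftrightarrow> x3 = branch d t x1 \<or> x3 = - branch d t x1"
      and "\<bar>branch d t x1\<bar> \<le> 1" if "amplitude d t x1 \<le> 1"
      using level_bounds[OF assms(1,2) B(1) that] by (auto simp: branch_def square_eq_iff_sqrt)
    ultimately show ?thesis
      unfolding zeroset_def sq_def by fastforce
  qed
  then show ?thesis
    by (auto simp: set_eq_iff)
qed

lemma branch_bounds:
  assumes "0 < d" "d < 1" "- 1 \<le> t" "t \<le> 1" "amplitude d t x \<le> 1"
  shows "0 \<le> branch d t x" "branch d t x \<le> 1"
  using level_bounds[OF assms(1,2) amplitude_bounds(1)[OF assms(1-4)] assms(5)]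
  by (auto simp: branch_def)

lemma branch_eq_0_iff:
  assumes "0 < d" "d < 1" "- 1 \<le> t" "t \<le> 1"
  shows "branch d t x = 0 \<longleftrightarrow> amplitude d t x = 1"
  using level_eq_0_iff[OF assms(1,2) amplitude_bounds[OF assms]] by (simp add: branch_def)

lemma branch_eq_1: "1 \<le> x\<^sup>2 \<Longrightarrow> branch d t x = 1"
  by (simp add: branch_def amplitude_def bump_eq_0 level_0)

lemma continuous_on_branch:
  assumes "0 < d" "d < 1" "- 1 \<le> t" "t \<le> 1"
  shows "continuous_on S (branch d t)"
proof -
  have "continuous_on S (amplitude d t)"
    unfolding amplitude_def[abs_def] by (intro continuous_intros continuous_at_imp_continuous_on ballI isCont_bump)
  moreover have "\<forall>x\<in>S. 1 - (1 - d) * amplitude d t x \<noteq> 0"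
    using level_denominator_pos[OF assms(1,2) amplitude_bounds[OF assms]] by (metis less_irrefl)
  ultimately show ?thesis
    unfolding branch_def[abs_def] level_def by (auto intro!: continuous_intros)
qed

lemma d1_family: "d1 (family d t) (x1, x3) = weight d t * deriv bump x1 * cutoff d (x3\<^sup>2) / 4"
proof -
  have "(bump has_real_derivative deriv bump x1) (at x1)"
    using smooth_on_bump by (rule smooth_on_UNIV_real_has_derivative)
  then have "((\<lambda>s. family d t (s, x3)) has_real_derivative weight d t * deriv bump x1 * cutoff d (x3\<^sup>2) / 4) (at x1)"
    unfolding family_def fst_conv snd_conv by (auto intro!: derivative_eq_intros)
  then show ?thesis
    by (simp add: d1_def DERIV_imp_deriv)
qed

lemma d2_family:
  "d2 (family d t) (x1, x3) =
    (2 * x3 - amplitude d t x1 * deriv (ramp d) (1 - (1 - d) * x3\<^sup>2) * (1 - d) * (2 * x3)) / 4"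
proof -
  have ramp: "(ramp d has_real_derivative deriv (ramp d) (1 - (1 - d) * x3\<^sup>2)) (at (1 - (1 - d) * x3\<^sup>2))"
    using smooth_on_ramp by (rule smooth_on_UNIV_real_has_derivative)
  have "((\<lambda>s. 1 - (1 - d) * s\<^sup>2) has_real_derivative - ((1 - d) * (2 * x3))) (at x3)"
    by (auto intro!: derivative_eq_intros)
  from DERIV_chain2[where g = "\<lambda>s. 1 - (1 - d) * s\<^sup>2", OF ramp this]
  have "((\<lambda>s. cutoff d (s\<^sup>2)) has_real_derivative
      deriv (ramp d) (1 - (1 - d) * x3\<^sup>2) * - ((1 - d) * (2 * x3))) (at x3)"
    by (simp add: cutoff_def)
  then have "((\<lambda>s. family d t (x1, s)) has_real_derivative
      (2 * x3 - amplitude d t x1 * deriv (ramp d) (1 - (1 - d) * x3\<^sup>2) * (1 - d) * (2 * x3)) / 4) (at x3)"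
    unfolding family_def fst_conv snd_conv amplitude_def[symmetric]
    by (auto intro!: derivative_eq_intros simp: field_simps)
  then show ?thesis
    by (simp add: d2_def DERIV_imp_deriv)
qed

lemma d2_family_inner:
  assumes "0 < d" "d < 1" "x3\<^sup>2 \<le> 1"
  shows "d2 (family d t) (x1, x3) = x3 * (1 - (1 - d) * amplitude d t x1) / 2"
proof -
  have "(1 - d) * x3\<^sup>2 \<le> 1 - d"
    using assms mult_left_mono[of "x3\<^sup>2" 1 "1 - d"] by simp
  then have "d / 2 < 1 - (1 - d) * x3\<^sup>2"
    using assms by linarith
  then have "deriv (ramp d) (1 - (1 - d) * x3\<^sup>2) = 1"
    using assms by (intro deriv_ramp_eq_1)
  then show ?thesis
    by (simp add: d2_family field_simps)
qed

lemma order_one_family: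
  assumes "0 < d" "d < 1" "- 1 \<le> t" "t \<le> 1"
    and "p \<in> zeroset (family d t)" "p \<noteq> (0, 0)"
  shows "order_one (family d t) p"
proof -
  obtain x1 x3 where x: "p = (x1, x3)"
    by fastforce
  have p: "(x1, x3) \<in> zeroset (family d t)" "(x1, x3) \<noteq> (0, 0)"
    using assms(5,6) by (simp_all add: x)
  have amp: "amplitude d t x1 \<le> 1" and x3: "x3 = branch d t x1 \<or> x3 = - branch d t x1"
    using p(1) by (auto simp: zeroset_family[OF assms(1-4)])
  have "x3\<^sup>2 \<le> 1"
    using x3 branch_bounds[OF assms(1-4) amp] by (auto simp: abs_square_le_1)
  have "d1 (family d t) (x1, x3) \<noteq> 0 \<or> d2 (family d t) (x1, x3) \<noteq> 0"
  proof (cases "x3 = 0")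
    case False
    have "0 < 1 - (1 - d) * amplitude d t x1"
      using level_denominator_pos[OF assms(1,2) amplitude_bounds(1)[OF assms(1-4)]] amp assms by simp
    then show ?thesis
      using False by (simp add: d2_family_inner[OF assms(1,2) \<open>x3\<^sup>2 \<le> 1\<close>])
  next
    case True
    then have "amplitude d t x1 = 1"
      using x3 branch_eq_0_iff[OF assms(1-4)] by auto
    then have "weight d t \<noteq> 0" "bump x1 \<noteq> 0"
      by (auto simp: amplitude_def)
    then have "x1\<^sup>2 < 1"
      using bump_eq_0[of x1] by fastforce
    moreover have "x1 \<noteq> 0"
      using True p(2) by simp
    ultimately show ?thesis
      using True \<open>weight d t \<noteq> 0\<close> deriv_bump_nonzero[of x1] cutoff_eq_linear[OF assms(1,2), of 0]
      by (simp add: d1_family)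
  qed
  then show ?thesis
    using p(1) by (auto simp: order_one_def zeroset_def x)
qed

lemma origin_in_zeroset_family_iff:
  assumes "0 < d" "d < 1" "- 1 \<le> t" "t \<le> 1"
  shows "(0, 0) \<in> zeroset (family d t) \<longleftrightarrow> t = 0"
  using branch_eq_0_iff[OF assms, of 0] weight_eq_1_iff[OF assms(1-3)]
  by (auto simp: zeroset_family[OF assms] amplitude_def bump_0)

lemma order_one_family_nonzero:
  assumes "0 < d" "d < 1" "- 1 \<le> t" "t \<le> 1" "t \<noteq> 0"
  shows "\<forall>p\<in>zeroset (family d t). order_one (family d t) p"
  using order_one_family[OF assms(1-4)] origin_in_zeroset_family_iff[OF assms(1-4)] assms(5) by blast

lemma quadratic_crossing_family:
  assumes "0 < d" "d < 1"
  shows "quadratic_crossing (family d 0) (0, 0)"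
proof -
  have cutoff_0: "cutoff d 0 = 1"
    using cutoff_eq_linear[OF assms, of 0] by simp
  have d1_axis: "d1 (family d 0) (s, 0) = deriv bump s / 4" for s
    by (simp add: d1_family weight_0 cutoff_0)
  have d2_near: "d2 (family d 0) (s1, s) = s * (1 - (1 - d) * bump s1) / 2" if "s\<^sup>2 \<le> 1" for s1 s
    using d2_family_inner[OF assms that] by (simp add: amplitude_def weight_0)
  have "((\<lambda>s. deriv bump s / 4) has_real_derivative - 2 / 4) (at 0)"
    by (intro DERIV_cdivide deriv_bump_has_real_derivative_at_0)
  then have D11: "d1 (d1 (family d 0)) (0, 0) = - 1 / 2"
    unfolding d1_def[of "d1 (family d 0)"] fst_conv snd_conv d1_axis by (simp add: DERIV_imp_deriv)
  have D21: "d2 (d1 (family d 0)) (0, 0) = 0"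
    by (simp add: d2_def d1_family deriv_bump_0)
  have D12: "d1 (d2 (family d 0)) (0, 0) = 0"
    by (simp add: d1_def d2_near)
  have "((\<lambda>s. s * d / 2) has_real_derivative d / 2) (at 0)"
    by (auto intro!: derivative_eq_intros)
  then have "((\<lambda>s. d2 (family d 0) (0, s)) has_real_derivative d / 2) (at 0)"
  proof (rule has_field_derivative_transform_within_open[of _ _ _ "ball 0 1"])
    show "s * d / 2 = d2 (family d 0) (0, s)" if "s \<in> ball 0 1" for s
      using that d2_near[of s 0] by (simp add: abs_square_le_1 bump_0)
  qed auto
  then have D22: "d2 (d2 (family d 0)) (0, 0) = d / 2"
    by (simp add: d2_def DERIV_imp_deriv)
  show ?thesis
    unfolding quadratic_crossing_def
    using D11 D21 D12 D22 assms d2_near[of 0 0]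
    by (simp add: family_def weight_0 bump_0 cutoff_0 d1_family deriv_bump_0)
qed

definition graph_path :: "(real \<Rightarrow> real) \<Rightarrow> real \<Rightarrow> real \<Rightarrow> real \<Rightarrow> real \<times> real" where
  "graph_path f a b = (\<lambda>s. (linepath a b s, f (linepath a b s)))"

lemma path_image_graph_path: "path_image (graph_path f a b) = (\<lambda>x. (x, f x)) ` closed_segment a b"
proof -
  have "path_image (graph_path f a b) = (\<lambda>x. (x, f x)) ` (linepath a b ` {0..1})"
    by (auto simp: path_image_def graph_path_def image_image)
  then show ?thesis
    by (simp add: linepath_image_01)
qed

lemma pathstart_graph_path [simp]: "pathstart (graph_path f a b) = (a, f a)"
  by (simp add: graph_path_def pathstart_def linepath_0')

lemma pathfinish_graph_path [simp]: "pathfinish (graph_path f a b) = (b, f b)"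
  by (simp add: graph_path_def pathfinish_def linepath_1')

lemma arc_graph_path:
  assumes "a \<noteq> b" "continuous_on (closed_segment a b) f"
  shows "arc (graph_path f a b)"
proof -
  have "path (linepath a b)" and inj: "inj_on (linepath a b) {0..1}"
    using arc_linepath[OF assms(1)] by (auto simp: arc_def)
  then have "continuous_on {0..1} (linepath a b)"
    by (simp add: path_def)
  moreover have "continuous_on {0..1} (\<lambda>s. f (linepath a b s))"
    using assms(2) by (rule continuous_on_compose2[OF _ continuous_on_path]) (auto simp: linepath_image_01)
  ultimately have "path (graph_path f a b)"
    unfolding path_def graph_path_def by (rule continuous_on_Pair)
  moreover have "inj_on (graph_path f a b) {0..1}"
    using inj unfolding inj_on_def graph_path_def by simp
  ultimately show ?thesis
    by (simp add: arc_def)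
qed

lemma arc_graph_path_fold:
  assumes "a \<noteq> b" "continuous_on (closed_segment a b) f"
    and zero: "\<And>x. x \<in> closed_segment a b \<Longrightarrow> f x = 0 \<longleftrightarrow> x = b"
  defines "\<gamma> \<equiv> graph_path f a b +++ reversepath (graph_path (\<lambda>x. - f x) a b)"
  shows "arc \<gamma>" "pathstart \<gamma> = (a, f a)" "pathfinish \<gamma> = (a, - f a)"
    "path_image \<gamma> = (\<lambda>x. (x, f x)) ` closed_segment a b \<union> (\<lambda>x. (x, - f x)) ` closed_segment a b"
proof -
  have fb: "f b = 0"
    using zero[of b] by simp
  have arcs: "arc (graph_path f a b)" "arc (reversepath (graph_path (\<lambda>x. - f x) a b))"
    using assms(1,2) by (auto intro!: arc_graph_path arc_reversepath continuous_intros)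
  have join: "pathfinish (graph_path f a b) = pathstart (reversepath (graph_path (\<lambda>x. - f x) a b))"
    by (simp add: fb)
  have "path_image (graph_path f a b) \<inter> path_image (reversepath (graph_path (\<lambda>x. - f x) a b))
      \<subseteq> {pathstart (reversepath (graph_path (\<lambda>x. - f x) a b))}"
  proof
    fix p
    assume "p \<in> path_image (graph_path f a b) \<inter> path_image (reversepath (graph_path (\<lambda>x. - f x) a b))"
    then obtain x where "x \<in> closed_segment a b" "p = (x, f x)" "f x = - f x"
      by (auto simp: path_image_graph_path)
    then show "p \<in> {pathstart (reversepath (graph_path (\<lambda>x. - f x) a b))}"
      using zero by (simp add: fb)
  qed
  then show "arc \<gamma>"
    unfolding \<gamma>_def by (rule arc_join[OF arcs join])
  show "pathstart \<gamma> = (a, f a)" "pathfinish \<gamma> = (a, - f a)"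
    by (simp_all add: \<gamma>_def)
  show "path_image \<gamma> = (\<lambda>x. (x, f x)) ` closed_segment a b \<union> (\<lambda>x. (x, - f x)) ` closed_segment a b"
    unfolding \<gamma>_def path_image_join[OF join] by (simp add: path_image_graph_path)
qed

lemma homotopic_paths_in_convex:
  fixes p q :: "real \<Rightarrow> 'a::real_normed_vector"
  assumes "convex S" "path p" "path q" "path_image p \<subseteq> S" "path_image q \<subseteq> S"
    "pathstart q = pathstart p" "pathfinish q = pathfinish p"
  shows "homotopic_paths S p q"
proof -
  have "simply_connected S"
    using assms(1) by (rule convex_imp_simply_connected)
  then show ?thesis
    using assms(2-7) unfolding simply_connected_eq_homotopic_paths by simp
qed

lemma convex_sq: "convex (sq a b)"
  by (simp add: sq_def convex_Times)

lemma homotopic_paths_linepath_in_sq: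
  assumes "path \<gamma>" "path_image \<gamma> \<subseteq> sq a b" "pathstart \<gamma> = (a, c)" "pathfinish \<gamma> = (b, c)"
    "a \<le> c" "c \<le> b"
  shows "homotopic_paths (sq a b) \<gamma> (linepath (a, c) (b, c))"
proof (rule homotopic_paths_in_convex[OF convex_sq assms(1) path_linepath assms(2)])
  show "path_image (linepath (a, c) (b, c)) \<subseteq> sq a b"
    unfolding path_image_linepath
    by (rule closed_segment_subset[OF _ _ convex_sq]) (use assms in \<open>auto simp: sq_def\<close>)
qed (use assms in auto)

lemma closed_segment_real: "a \<le> b \<Longrightarrow> closed_segment a b = {a..b::real}"
  by (simp add: closed_segment_eq_real_ivl)

lemma mem_graph_iff: "(a, b) \<in> (\<lambda>x. (x, f x)) ` S \<longleftrightarrow> a \<in> S \<and> b = f a"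
  by auto

section \<open>The three regimes\<close>

lemma zeroset_family_neg:
  assumes "0 < d" "d < 1" "- 1 \<le> t" "t < 0"
  shows "\<exists>\<gamma>1 \<gamma>2. arc \<gamma>1 \<and> arc \<gamma>2 \<and> path_image \<gamma>1 \<inter> path_image \<gamma>2 = {} \<and>
    zeroset (family d t) = path_image \<gamma>1 \<union> path_image \<gamma>2 \<and>
    homotopic_paths (sq (-2) 2) \<gamma>1 (linepath (-2, 1) (2, 1)) \<and>
    homotopic_paths (sq (-2) 2) \<gamma>2 (linepath (-2, -1) (2, -1))"
proof -
  have t: "- 1 \<le> t" "t \<le> 1"
    using assms by auto
  have amp: "amplitude d t x < 1" for x
    using weight_neg[OF assms] bump_le_1[of x] mult_left_mono[of "bump x" 1 "weight d t"]
    by (simp add: amplitude_def)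
  have r: "0 < branch d t x" "branch d t x \<le> 1" for x
    using branch_bounds[OF assms(1,2) t less_imp_le[OF amp]] branch_eq_0_iff[OF assms(1,2) t, of x] amp[of x]
    by (auto simp: less_le)
  define \<gamma>1 where "\<gamma>1 = graph_path (branch d t) (-2) 2"
  define \<gamma>2 where "\<gamma>2 = graph_path (\<lambda>x. - branch d t x) (-2) 2"
  have images: "path_image \<gamma>1 = (\<lambda>x. (x, branch d t x)) ` {-2..2}"
    "path_image \<gamma>2 = (\<lambda>x. (x, - branch d t x)) ` {-2..2}"
    by (simp_all add: \<gamma>1_def \<gamma>2_def path_image_graph_path closed_segment_real)
  have arcs: "arc \<gamma>1" "arc \<gamma>2"
    unfolding \<gamma>1_def \<gamma>2_def
    by (auto intro!: arc_graph_path continuous_intros continuous_on_branch[OF assms(1,2) t])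
  have "(x, branch d t x) \<noteq> (y, - branch d t y)" for x y
    using r[of x] by auto
  then have "path_image \<gamma>1 \<inter> path_image \<gamma>2 = {}"
    unfolding images by blast
  moreover have "zeroset (family d t) = path_image \<gamma>1 \<union> path_image \<gamma>2"
    unfolding zeroset_family[OF assms(1,2) t] images using amp by (auto simp: less_imp_le)
  moreover have "- 2 \<le> branch d t x \<and> branch d t x \<le> 2 \<and> - branch d t x \<le> 2" for x
    using r[of x] by linarith
  then have "path_image \<gamma>1 \<subseteq> sq (-2) 2" "path_image \<gamma>2 \<subseteq> sq (-2) 2"
    unfolding images sq_def by auto
  moreover have "branch d t (-2) = 1" "branch d t 2 = 1"
    by (simp_all add: branch_eq_1)
  ultimately show ?thesis
    using arcs by (intro exI[of _ \<gamma>1] exI[of _ \<gamma>2])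
      (simp add: \<gamma>1_def \<gamma>2_def homotopic_paths_linepath_in_sq arc_imp_path)
qed

text \<open>At \<open>t = 0\<close> each arc follows the upper branch up to the crossing and the lower one after it.\<close>
lemma zeroset_family_0:
  assumes "0 < d" "d < 1"
  shows "\<exists>\<gamma>1 \<gamma>2 q. arc \<gamma>1 \<and> arc \<gamma>2 \<and> path_image \<gamma>1 \<inter> path_image \<gamma>2 = {q} \<and>
    zeroset (family d 0) = path_image \<gamma>1 \<union> path_image \<gamma>2 \<and>
    pathstart \<gamma>1 = (-2, 1) \<and> pathfinish \<gamma>1 = (2, -1) \<and>
    pathstart \<gamma>2 = (-2, -1) \<and> pathfinish \<gamma>2 = (2, 1) \<and>
    quadratic_crossing (family d 0) q \<and> (\<forall>p\<in>zeroset (family d 0) - {q}. order_one (family d 0) p)"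
proof -
  have t: "- 1 \<le> (0::real)" "(0::real) \<le> 1"
    by auto
  have amp: "amplitude d 0 x = bump x" for x
    by (simp add: amplitude_def weight_0)
  have r0: "branch d 0 x = 0 \<longleftrightarrow> x = 0" for x
    using branch_eq_0_iff[OF assms t, of x] bump_less_1[of x] by (cases "x = 0") (auto simp: amp bump_0)
  define h where "h x = (if x \<le> 0 then branch d 0 x else - branch d 0 x)" for x
  have h0: "h x = 0 \<longleftrightarrow> x = 0" for x
    using r0 by (simp add: h_def)
  have "continuous_on {-2..2} h"
    unfolding h_def using r0
    by (intro continuous_on_cases_le[where h = "\<lambda>x. x" and a = 0])
      (auto intro!: continuous_intros continuous_on_branch[OF assms t])
  then have arcs: "arc (graph_path h (-2) 2)" "arc (graph_path (\<lambda>x. - h x) (-2) 2)"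
    by (auto intro!: arc_graph_path continuous_intros simp: closed_segment_real)
  have images: "path_image (graph_path h (-2) 2) = (\<lambda>x. (x, h x)) ` {-2..2}"
    "path_image (graph_path (\<lambda>x. - h x) (-2) 2) = (\<lambda>x. (x, - h x)) ` {-2..2}"
    by (simp_all add: path_image_graph_path closed_segment_real)
  have "(a, b) \<in> path_image (graph_path h (-2) 2) \<inter> path_image (graph_path (\<lambda>x. - h x) (-2) 2) \<longleftrightarrow>
      (a, b) = (0, 0)" for a b
    unfolding images mem_graph_iff Int_iff using h0[of a] h0[of 0] by auto
  then have "path_image (graph_path h (-2) 2) \<inter> path_image (graph_path (\<lambda>x. - h x) (-2) 2) = {(0, 0)}"
    by auto
  moreover have "zeroset (family d 0) = path_image (graph_path h (-2) 2) \<union> path_image (graph_path (\<lambda>x. - h x) (-2) 2)"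
    unfolding zeroset_family[OF assms t] images by (auto simp: amp bump_le_1 h_def mem_graph_iff)
  moreover have "h (-2) = 1" "h 2 = - 1"
    by (simp_all add: h_def branch_eq_1)
  ultimately show ?thesis
    using arcs quadratic_crossing_family[OF assms] order_one_family[OF assms t]
    by (intro exI[of _ "graph_path h (-2) 2"] exI[of _ "graph_path (\<lambda>x. - h x) (-2) 2"] exI[of _ "(0, 0)"])
      auto
qed

lemma amplitude_threshold:
  assumes "0 < d" "0 < t"
  obtains \<rho> where "0 < \<rho>" "\<rho> < 1" "\<And>x. amplitude d t x \<le> 1 \<longleftrightarrow> \<rho> \<le> \<bar>x\<bar>"
    "\<And>x. amplitude d t x = 1 \<longleftrightarrow> \<bar>x\<bar> = \<rho>"
proof -
  have w: "1 < weight d t"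
    using assms by (simp add: weight_pos)
  obtain \<rho> where "0 \<le> \<rho>" "\<rho> \<le> 1" and bump_\<rho>: "bump \<rho> = 1 / weight d t"
    using IVT2'[of bump 1 "1 / weight d t" 0] w bump_0 bump_eq_0[of 1]
      continuous_at_imp_continuous_on[OF ballI[OF isCont_bump]]
    by auto
  moreover have "\<rho> \<noteq> 0" "\<rho> \<noteq> 1"
    using bump_\<rho> w bump_0 bump_eq_0[of 1] by auto
  ultimately have \<rho>: "0 < \<rho>" "\<rho> < 1" "\<rho>\<^sup>2 < 1"
    by (auto simp: abs_square_less_1)
  have "amplitude d t x \<le> 1 \<longleftrightarrow> \<rho> \<le> \<bar>x\<bar>" for x
  proof -
    have "amplitude d t x \<le> 1 \<longleftrightarrow> bump x \<le> bump \<rho>"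
      using w by (simp add: amplitude_def bump_\<rho> pos_le_divide_eq mult.commute)
    also have "\<dots> \<longleftrightarrow> \<rho>\<^sup>2 \<le> x\<^sup>2"
      by (rule bump_le_bump_iff[OF \<rho>(3)])
    finally show ?thesis
      using \<rho>(1) by (simp add: abs_le_square_iff[symmetric])
  qed
  moreover have "amplitude d t x = 1 \<longleftrightarrow> \<bar>x\<bar> = \<rho>" for x
  proof -
    have "amplitude d t x = 1 \<longleftrightarrow> bump x = bump \<rho>"
      using w by (auto simp: amplitude_def bump_\<rho> field_simps)
    also have "\<dots> \<longleftrightarrow> x\<^sup>2 = \<rho>\<^sup>2"
      by (rule bump_eq_bump_iff[OF \<rho>(3)])
    also have "\<dots> \<longleftrightarrow> \<bar>x\<bar> = \<rho>"
      using \<rho>(1) by (auto simp: power2_eq_iff abs_if)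
    finally show ?thesis .
  qed
  ultimately show ?thesis
    using that \<rho>(1,2) by blast
qed

lemma zeroset_family_pos:
  assumes "0 < d" "d < 1" "0 < t" "t \<le> 1"
  shows "\<exists>\<gamma>1 \<gamma>2. arc \<gamma>1 \<and> arc \<gamma>2 \<and> path_image \<gamma>1 \<inter> path_image \<gamma>2 = {} \<and>
    zeroset (family d t) = path_image \<gamma>1 \<union> path_image \<gamma>2 \<and>
    pathstart \<gamma>1 = (-2, 1) \<and> pathfinish \<gamma>1 = (-2, -1) \<and>
    pathstart \<gamma>2 = (2, 1) \<and> pathfinish \<gamma>2 = (2, -1)"
proof -
  have t: "- 1 \<le> t" "t \<le> 1"
    using assms by auto
  obtain \<rho> where \<rho>: "0 < \<rho>" "\<rho> < 1"
    and amp_le: "\<And>x. amplitude d t x \<le> 1 \<longleftrightarrow> \<rho> \<le> \<bar>x\<bar>"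
    and amp_eq: "\<And>x. amplitude d t x = 1 \<longleftrightarrow> \<bar>x\<bar> = \<rho>"
    using amplitude_threshold[OF assms(1,3)] by blast
  have r0: "branch d t x = 0 \<longleftrightarrow> \<bar>x\<bar> = \<rho>" for x
    using branch_eq_0_iff[OF assms(1,2) t] amp_eq by simp
  have cont: "continuous_on S (branch d t)" for S
    by (rule continuous_on_branch[OF assms(1,2) t])
  have left: "x \<in> closed_segment (-2) (-\<rho>) \<Longrightarrow> branch d t x = 0 \<longleftrightarrow> x = -\<rho>" for x
    using r0 \<rho> by (auto simp: closed_segment_real)
  have right: "x \<in> closed_segment 2 \<rho> \<Longrightarrow> branch d t x = 0 \<longleftrightarrow> x = \<rho>" for x
    using r0 \<rho> by (auto simp: closed_segment_eq_real_ivl)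
  define \<gamma>1 where "\<gamma>1 = graph_path (branch d t) (-2) (-\<rho>) +++ reversepath (graph_path (\<lambda>x. - branch d t x) (-2) (-\<rho>))"
  define \<gamma>2 where "\<gamma>2 = graph_path (branch d t) 2 \<rho> +++ reversepath (graph_path (\<lambda>x. - branch d t x) 2 \<rho>)"
  have segs: "closed_segment (-2) (-\<rho>) = {-2..-\<rho>}" "closed_segment 2 \<rho> = {\<rho>..2}"
    using \<rho> by (auto simp: closed_segment_eq_real_ivl)
  have \<gamma>1: "arc \<gamma>1" "pathstart \<gamma>1 = (-2, 1)" "pathfinish \<gamma>1 = (-2, -1)"
    "path_image \<gamma>1 = (\<lambda>x. (x, branch d t x)) ` {-2..-\<rho>} \<union> (\<lambda>x. (x, - branch d t x)) ` {-2..-\<rho>}"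
    using arc_graph_path_fold[of "-2" "-\<rho>", OF _ cont left] \<rho> by (simp_all add: \<gamma>1_def segs branch_eq_1)
  have \<gamma>2: "arc \<gamma>2" "pathstart \<gamma>2 = (2, 1)" "pathfinish \<gamma>2 = (2, -1)"
    "path_image \<gamma>2 = (\<lambda>x. (x, branch d t x)) ` {\<rho>..2} \<union> (\<lambda>x. (x, - branch d t x)) ` {\<rho>..2}"
    using arc_graph_path_fold[of 2 \<rho>, OF _ cont right] \<rho> by (simp_all add: \<gamma>2_def segs branch_eq_1)
  have "path_image \<gamma>1 \<inter> path_image \<gamma>2 = {}"
    unfolding \<gamma>1(4) \<gamma>2(4) using \<rho> by (auto simp: mem_graph_iff)
  moreover have "zeroset (family d t) = path_image \<gamma>1 \<union> path_image \<gamma>2"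
    unfolding zeroset_family[OF assms(1,2) t] amp_le \<gamma>1(4) \<gamma>2(4) using \<rho> by (auto simp: mem_graph_iff)
  ultimately show ?thesis
    using \<gamma>1(1-3) \<gamma>2(1-3) by blast
qed

section \<open>Uniform \<open>C\<^sup>1\<close> bound\<close>

lemma abs_cutoff_le:
  assumes "0 < d" "d < 1" "0 \<le> u"
  shows "\<bar>cutoff d u\<bar> \<le> 1 + u"
proof -
  have "0 \<le> (1 - d) * u" "(1 - d) * u \<le> u"
    using assms mult_right_mono[of "1 - d" 1 u] by auto
  then show ?thesis
    using abs_ramp_le[of d "1 - (1 - d) * u"] by (simp add: cutoff_def)
qed

lemma abs_family_le:
  assumes "0 < d" "d < 1" "- 1 \<le> t" "t \<le> 1" "\<bar>x3\<bar> \<le> 2"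
  shows "\<bar>family d t (x1, x3)\<bar> \<le> 4"
proof -
  have "x3\<^sup>2 \<le> 4"
    using abs_le_square_iff[of x3 2] assms(5) by simp
  then have "\<bar>cutoff d (x3\<^sup>2)\<bar> \<le> 5"
    using abs_cutoff_le[OF assms(1,2) zero_le_power2, of x3] by simp
  moreover have "0 \<le> amplitude d t x1" "amplitude d t x1 \<le> 2"
    using amplitude_bounds[OF assms(1-4), of x1] assms(2) by auto
  ultimately have "\<bar>amplitude d t x1 * cutoff d (x3\<^sup>2)\<bar> \<le> 2 * 5"
    unfolding abs_mult by (intro mult_mono) auto
  then have "\<bar>x3\<^sup>2 - 1 + amplitude d t x1 * cutoff d (x3\<^sup>2)\<bar> \<le> 16"
    using \<open>x3\<^sup>2 \<le> 4\<close> zero_le_power2[of x3] unfolding abs_le_iff by (intro conjI; linarith)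
  then show ?thesis
    by (simp add: family_eq)
qed

lemma abs_d1_family_le:
  assumes "0 < d" "d < 1" "- 1 \<le> t" "t \<le> 1" "\<bar>x3\<bar> \<le> 2" "\<bar>deriv bump x1\<bar> \<le> K"
  shows "\<bar>d1 (family d t) (x1, x3)\<bar> \<le> 3 * K"
proof -
  have "x3\<^sup>2 \<le> 4"
    using abs_le_square_iff[of x3 2] assms(5) by simp
  then have "\<bar>cutoff d (x3\<^sup>2)\<bar> \<le> 5"
    using abs_cutoff_le[OF assms(1,2) zero_le_power2, of x3] by simp
  moreover have "\<bar>weight d t * deriv bump x1\<bar> \<le> 2 * K"
    unfolding abs_mult using weight_bounds[OF assms(1-4)] assms(2,6) by (intro mult_mono) auto
  moreover have "0 \<le> K"
    using assms(6) by linarith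
  ultimately have "\<bar>weight d t * deriv bump x1 * cutoff d (x3\<^sup>2)\<bar> \<le> 2 * K * 5"
    unfolding abs_mult[of "weight d t * deriv bump x1"] by (intro mult_mono) auto
  then show ?thesis
    using \<open>0 \<le> K\<close> by (simp add: d1_family)
qed

lemma abs_d2_family_le:
  assumes "0 < d" "d < 1" "- 1 \<le> t" "t \<le> 1" "\<bar>x3\<bar> \<le> 2" "\<And>y. \<bar>deriv (ramp d) y\<bar> \<le> K"
  shows "\<bar>d2 (family d t) (x1, x3)\<bar> \<le> 1 + 2 * K"
proof -
  have "0 \<le> K"
    using assms(6)[of 0] by linarith
  moreover have "0 \<le> amplitude d t x1" "amplitude d t x1 \<le> 2"
    using amplitude_bounds[OF assms(1-4), of x1] assms(2) by auto
  ultimately have "\<bar>amplitude d t x1 * deriv (ramp d) (1 - (1 - d) * x3\<^sup>2) * (1 - d) * (2 * x3)\<bar>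
      \<le> 2 * K * 1 * 4"
    unfolding abs_mult using assms(1,2,5,6) by (intro mult_mono) auto
  then have "\<bar>2 * x3 - amplitude d t x1 * deriv (ramp d) (1 - (1 - d) * x3\<^sup>2) * (1 - d) * (2 * x3)\<bar>
      \<le> 4 + 8 * K"
    using assms(5) unfolding abs_le_iff by (intro conjI; linarith)
  then show ?thesis
    by (simp add: d2_family)
qed

lemma family_C1_bounded:
  "\<exists>C. \<forall>d\<in>{0<..<1}. \<forall>t\<in>{-1..1}. \<forall>x\<in>sq (-2) 2.
    \<bar>family d t x\<bar> \<le> C \<and> \<bar>d1 (family d t) x\<bar> \<le> C \<and> \<bar>d2 (family d t) x\<bar> \<le> C"
proof -
  obtain Kb where Kb: "0 \<le> Kb" "\<And>x. x \<in> {-2..2} \<Longrightarrow> \<bar>deriv bump x\<bar> \<le> Kb"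
    using continuous_on_compact_bound[of "{-2..2::real}" "deriv bump"]
      continuous_at_imp_continuous_on[OF ballI[OF isCont_deriv_bump]] by auto
  obtain KL where KL: "\<And>d y. 0 < d \<Longrightarrow> \<bar>deriv (ramp d) y\<bar> \<le> KL"
    using bounded_deriv_ramp by blast
  have "0 \<le> KL"
    using KL[of 1 0] by simp
  show ?thesis
  proof (intro exI[of _ "5 + 3 * Kb + 2 * KL"] ballI)
    fix d t :: real and x :: "real \<times> real"
    assume "d \<in> {0<..<1}" "t \<in> {-1..1}" "x \<in> sq (-2) 2"
    moreover obtain x1 x3 where "x = (x1, x3)"
      by fastforce
    ultimately have "\<bar>family d t x\<bar> \<le> 4" "\<bar>d1 (family d t) x\<bar> \<le> 3 * Kb" "\<bar>d2 (family d t) x\<bar> \<le> 1 + 2 * KL"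
      using abs_family_le abs_d1_family_le[OF _ _ _ _ _ Kb(2)] abs_d2_family_le[OF _ _ _ _ _ KL]
      by (auto simp: sq_def)
    then show "\<bar>family d t x\<bar> \<le> 5 + 3 * Kb + 2 * KL \<and> \<bar>d1 (family d t) x\<bar> \<le> 5 + 3 * Kb + 2 * KL \<and>
        \<bar>d2 (family d t) x\<bar> \<le> 5 + 3 * Kb + 2 * KL"
      using Kb(1) \<open>0 \<le> KL\<close> by linarith
  qed
qed

theorem mainTheorem8:
  "\<exists>F :: real \<Rightarrow> real \<Rightarrow> real \<times> real \<Rightarrow> real.
    (\<forall>\<delta>\<in>{0<..1/10}.
       (\<exists>U. open U \<and> {-1..1} \<times> sq (-2) 2 \<subseteq> U \<and>
            smooth_on U (\<lambda>(t, x). F \<delta> t x))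
     \<and> (\<forall>x\<in>sq (-2) 2. F \<delta> (-1) x = f0 x)
     \<and> (\<forall>t\<in>{-1..1}. \<forall>x\<in>sq (-2) 2 - sq (-1 - 2*\<delta>) (1 + 2*\<delta>). F \<delta> t x = F \<delta> (-1) x)
     \<and> (\<forall>t\<in>{-1..<0}. (\<exists>\<gamma>1 \<gamma>2. arc \<gamma>1 \<and> arc \<gamma>2 \<and>
            path_image \<gamma>1 \<inter> path_image \<gamma>2 = {} \<and>
            zeroset (F \<delta> t) = path_image \<gamma>1 \<union> path_image \<gamma>2 \<and>
            homotopic_paths (sq (-2) 2) \<gamma>1 (linepath (-2, 1) (2, 1)) \<and>
            homotopic_paths (sq (-2) 2) \<gamma>2 (linepath (-2, -1) (2, -1)))
          \<and> (\<forall>p\<in>zeroset (F \<delta> t). order_one (F \<delta> t) p))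
     \<and> (\<exists>\<gamma>1 \<gamma>2 q. arc \<gamma>1 \<and> arc \<gamma>2 \<and>
            path_image \<gamma>1 \<inter> path_image \<gamma>2 = {q} \<and>
            zeroset (F \<delta> 0) = path_image \<gamma>1 \<union> path_image \<gamma>2 \<and>
            pathstart \<gamma>1 = (-2, 1) \<and> pathfinish \<gamma>1 = (2, -1) \<and>
            pathstart \<gamma>2 = (-2, -1) \<and> pathfinish \<gamma>2 = (2, 1) \<and>
            quadratic_crossing (F \<delta> 0) q \<and>
            (\<forall>p\<in>zeroset (F \<delta> 0) - {q}. order_one (F \<delta> 0) p))
     \<and> (\<forall>t\<in>{0<..1}. (\<exists>\<gamma>1 \<gamma>2. arc \<gamma>1 \<and> arc \<gamma>2 \<and>
            path_image \<gamma>1 \<inter> path_image \<gamma>2 = {} \<and>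
            zeroset (F \<delta> t) = path_image \<gamma>1 \<union> path_image \<gamma>2 \<and>
            pathstart \<gamma>1 = (-2, 1) \<and> pathfinish \<gamma>1 = (-2, -1) \<and>
            pathstart \<gamma>2 = (2, 1) \<and> pathfinish \<gamma>2 = (2, -1))
          \<and> (\<forall>p\<in>zeroset (F \<delta> t). order_one (F \<delta> t) p)))
  \<and> (\<exists>C. \<forall>\<delta>\<in>{0<..1/10}. \<forall>t\<in>{-1..1}. \<forall>x\<in>sq (-2) 2.
        \<bar>F \<delta> t x\<bar> \<le> C \<and> \<bar>d1 (F \<delta> t) x\<bar> \<le> C \<and> \<bar>d2 (F \<delta> t) x\<bar> \<le> C)"
  apply (intro exI[of _ family] conjI ballI)
  subgoal by (intro exI[of _ UNIV]) (simp add: smooth_on_family)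
  subgoal by (rule family_minus_1)
  subgoal for \<delta> t x by (simp add: family_eq_f0_outside family_minus_1)
  subgoal for \<delta> t by (rule zeroset_family_neg) auto
  subgoal for \<delta> t using order_one_family_nonzero[of \<delta> t] by auto
  subgoal for \<delta> by (rule zeroset_family_0) auto
  subgoal for \<delta> t by (rule zeroset_family_pos) auto
  subgoal for \<delta> t using order_one_family_nonzero[of \<delta> t] by auto
  subgoal using family_C1_bounded by fastforce
  done

end
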